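(* Let $K\in\mathbb R$ and let $Q$ be a polynomial of the form $$Q(z)=-\frac14z^4+\frac K2z^2+iz+C$$ for some constant $C$, which can also be written as $$Q(z)=-\frac14(z-z_1)(z-z_2)(z-z_0)^2,\qquad z_0=-ai,\quad z_1=-b+ci,\quad z_2=b+ci,$$ with real parameters $a,b,c$ and $b>0$. Then $b$ is the unique positive real root of $b^6-2Kb^4-8=0$, the parameters $a$ and $c$ satisfy $a=c=\frac{2}{b^2}$, and $C=-\frac{b^6+4}{b^8}$. *)

theory Defs
  imports Complex_Main
begin

end

theory Submission
  imports Defs
begin

text \<open>Comparing coefficients of \<open>Q\<close> with those of the factorisation gives four equations:
  the cubic one forces \<open>c = a\<close>, the linear one \<open>a b\<^sup>2 = 2\<close>, the quadratic one
  \<open>K = b\<^sup>2/2 - a\<^sup>2\<close> and the constant one determines \<open>C\<close>. Eliminating \<open>a\<close> yields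
  \<open>b\<^sup>6 - 2K b\<^sup>4 - 8 = 0\<close>, whose positive root is unique because on \<open>x > 0\<close> the equation
  reads \<open>2K = x\<^sup>2 - 8/x\<^sup>4\<close> with a strictly increasing right-hand side.\<close>

lemma cubic_identically_zero_imp_coeffs_zero:
  fixes e3 e2 e1 e0 :: "'a::field_char_0"
  assumes "\<And>z. e3 * z^3 + e2 * z^2 + e1 * z + e0 = 0"
  shows "e3 = 0 \<and> e2 = 0 \<and> e1 = 0 \<and> e0 = 0"
proof -
  have e0: "e0 = 0" using assms[of 0] by simp
  have at1: "e3 + e2 + e1 = 0" using assms[of 1] e0 by simp
  have at_minus1: "- e3 + e2 - e1 = 0" using assms[of "-1"] e0 by simp
  have at2: "8 * e3 + 4 * e2 + 2 * e1 = 0" using assms[of 2] e0 by (simp add: mult.commute)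
  have "2 * e2 = (e3 + e2 + e1) + (- e3 + e2 - e1)" by simp
  also have "\<dots> = 0" using at1 at_minus1 by simp
  finally have e2: "e2 = 0" by simp
  have e1: "e1 = - e3" using at1 e2 by (simp add: eq_neg_iff_add_eq_0 add.commute)
  have "6 * e3 = 0" using at2 e1 e2 by simp
  then show ?thesis using e0 e1 e2 by simp
qed

lemma sq_minus_inverse_fourth_strict_mono:
  fixes x y k :: real
  assumes "0 < x" "x < y" "k > 0"
  shows "x^2 - k / x^4 < y^2 - k / y^4"
proof -
  have "x^2 < y^2" "x^4 < y^4" using assms by (auto intro: power_strict_mono)
  moreover have "k / y^4 < k / x^4"
    using assms \<open>x^4 < y^4\<close> by (intro divide_strict_left_mono) auto
  ultimately show ?thesis by linarith
qed

lemma sextic_positive_root_unique: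
  fixes K k x y :: real
  assumes "k > 0" "x > 0" "y > 0"
    and "x^6 - K * x^4 - k = 0" "y^6 - K * y^4 - k = 0"
  shows "x = y"
proof -
  have level: "K = t^2 - k / t^4" if "t > 0" "t^6 - K * t^4 - k = 0" for t :: real
    using that by (simp add: field_simps)
  have "x^2 - k / x^4 = y^2 - k / y^4" using level assms by metis
  then show ?thesis
    using sq_minus_inverse_fourth_strict_mono[of x y k] sq_minus_inverse_fourth_strict_mono[of y x k]
      assms by (metis less_irrefl linorder_neqE_linordered_idom)
qed

lemma quartic_factorisation_coeffs:
  fixes K a b c :: real and C :: complex
  assumes "\<forall>z::complex.
      - (1/4) * z^4 + complex_of_real K / 2 * z^2 + \<i> * z + C
      = - (1/4) * (z - Complex (-b) c) * (z - Complex b c) * (z - Complex 0 (-a))^2"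
  shows "c = a \<and> a * b^2 = 2 \<and> K = b^2/2 - a^2
         \<and> C = complex_of_real (- (a^2 * (b^2 + a^2)) / 4)"
proof -
  define A B Cc Kc where "A = complex_of_real a" and "B = complex_of_real b"
    and "Cc = complex_of_real c" and "Kc = complex_of_real K"
  have roots: "Complex (-b) c = - B + \<i> * Cc" "Complex b c = B + \<i> * Cc" "Complex 0 (-a) = - \<i> * A"
    by (simp_all add: Complex_eq A_def B_def Cc_def)
  have "(\<i>/2 * (A - Cc)) * z^3
     + (Kc/2 + (- (A^2) + 4 * A * Cc - B^2 - Cc^2) / 4) * z^2
     + (\<i> + \<i>/2 * (Cc * A^2 - A * (B^2 + Cc^2))) * z
     + (C + A^2 * (B^2 + Cc^2) / 4) = 0" for z
  proof -
    have "- (1/4) * z^4 + Kc / 2 * z^2 + \<i> * z + C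
      = - (1/4) * (z - (- B + \<i> * Cc)) * (z - (B + \<i> * Cc)) * (z - (- \<i> * A))^2"
      using assms roots Kc_def by metis
    moreover have "\<i>^2 = -1" by simp
    ultimately show ?thesis by algebra
  qed
  then obtain cubic: "\<i>/2 * (A - Cc) = 0"
    and quadratic: "Kc/2 + (- (A^2) + 4 * A * Cc - B^2 - Cc^2) / 4 = 0"
    and linear: "\<i> + \<i>/2 * (Cc * A^2 - A * (B^2 + Cc^2)) = 0"
    and const: "C + A^2 * (B^2 + Cc^2) / 4 = 0"
    using cubic_identically_zero_imp_coeffs_zero by blast
  have ca: "c = a" using arg_cong[OF cubic, of Im] by (simp add: A_def Cc_def)
  have "K = b^2/2 - a^2" using arg_cong[OF quadratic, of Re] ca
    by (simp add: A_def B_def Cc_def Kc_def power2_eq_square field_simps)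
  moreover have "a * b^2 = 2" using arg_cong[OF linear, of Im] ca
    by (simp add: A_def B_def Cc_def power2_eq_square algebra_simps)
  moreover have "C = complex_of_real (- (a^2 * (b^2 + a^2)) / 4)"
  proof -
    have "C = - (A^2 * (B^2 + Cc^2) / 4)"
      using const by (simp add: eq_neg_iff_add_eq_0)
    then show ?thesis by (simp add: A_def B_def Cc_def ca)
  qed
  ultimately show ?thesis using ca by blast
qed

theorem lemma3p1:
  fixes K a b c :: real and C :: complex
  assumes hQ: "\<forall>z::complex.
      - (1/4) * z^4 + complex_of_real K / 2 * z^2 + \<i> * z + C
      = - (1/4) * (z - Complex (-b) c) * (z - Complex b c) * (z - Complex 0 (-a))^2"
    and hb: "b > 0"
  shows "b^6 - 2*K*b^4 - 8 = 0
         \<and> (\<forall>x::real. x > 0 \<and> x^6 - 2*K*x^4 - 8 = 0 \<longrightarrow> x = b)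
         \<and> a = 2 / b^2 \<and> c = 2 / b^2
         \<and> C = complex_of_real (- (b^6 + 4) / b^8)"
proof -
  obtain ca: "c = a" and ab: "a * b^2 = 2" and hK: "K = b^2/2 - a^2"
    and hC: "C = complex_of_real (- (a^2 * (b^2 + a^2)) / 4)"
    using quartic_factorisation_coeffs[OF hQ] by blast
  have ha: "a = 2 / b^2" using ab hb by (simp add: field_simps)
  have root: "b^6 - 2*K*b^4 - 8 = 0"
  proof -
    have "b^6 - 2*K*b^4 - 8 = 2 * (a * b^2)^2 - 8"
      unfolding hK by (simp add: algebra_simps power2_eq_square power_numeral_reduce)
    then show ?thesis using ab by simp
  qed
  have "x = b" if "x > 0" "x^6 - 2*K*x^4 - 8 = 0" for x
    using sextic_positive_root_unique[of 8 x b "2*K"] that hb root by simp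
  moreover have "- (a^2 * (b^2 + a^2)) / 4 = - (b^6 + 4) / b^8"
    unfolding ha using hb by (simp add: field_simps power2_eq_square power_numeral_reduce)
  ultimately show ?thesis using root ha ca hC by simp
qed

end
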